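(* Let $n\ge1$, let $\alpha_0,\ldots,\alpha_{2n+1}\in\mathbb{C}$ with $\sum_{i=0}^{2n+1}\alpha_i=1$, and assume \[ \alpha_{2i}^{2j-1}\notin\mathbb{Z},\quad \sum_{i=0}^n\alpha_{2i+1}\notin\mathbb{Z},\quad \alpha_{2i-1}^{2j-1}\notin\mathbb{Z}\qquad(i=1,\ldots,n,\ j=1,\ldots,n-i+1). \] Suppose $\mathbf{x}={}^t(x_0,\ldots,x_n)$ satisfies \[ \frac{d\mathbf{x}}{dt}=\Big(\frac{A_0}{t}+\frac{A_1}{1-t}\Big)\mathbf{x},\qquad A_0=\sum_{i=0}^{n-1}\big(-\alpha_{2i+2}^{2n-2i-1}\big)E_{i,i}+\sum_{i=0}^{n-1}\sum_{j=i+1}^{n}\alpha_{2j+1}E_{i,j},\quad A_1=\sum_{i=0}^{n}\sum_{j=0}^{n}\alpha_{2j+1}E_{i,j}. \] Then for each $i=0,\ldots,n$, the component $x=x_i$ satisfies the generalized hypergeometric equation \[ \big[\delta(\delta+b_1-1)\cdots(\delta+b_n-1)-t(\delta+a_0)(\delta+a_1)\cdots(\delta+a_n)\big]x=0,\qquad \delta=t\frac{d}{dt}, \] with $a_0=\alpha_1^{2n}$; $a_j=1+\alpha_{2n-2j+3}^{2j-2}$, $b_j=1+\alpha_{2n-2j+2}^{2j-1}$ for $j=1,\ldots,n-i$; and $a_j=\alpha_{2n-2j+3}^{2j-2}$, $b_j=\alpha_{2n-2j+2}^{2j-1}$ for $j=n-i+1,\ldots,n$.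
   Context: Indices of the parameters $\alpha_i$ are taken modulo $2n+2$. For integers $k,l$, $\alpha_k^l=0$ if $l<0$ and $\alpha_k^l=\sum_{i=k}^{k+l}\alpha_i$ if $l\ge0$. $E_{i,j}=(\delta_{i,k}\delta_{j,l})_{k,l=0}^{n}$ is the $(n+1)\times(n+1)$ matrix unit. *)

theory Defs
  imports "HOL-Analysis.Analysis"
begin

definition aidx :: "nat \<Rightarrow> (nat \<Rightarrow> complex) \<Rightarrow> int \<Rightarrow> complex" where
  "aidx n \<alpha> k = \<alpha> (nat (k mod (2 * int n + 2)))"

text \<open>alpha_k^l: zero if l < 0, otherwise sum of alpha_i for i = k..k+l.\<close>
definition asum :: "nat \<Rightarrow> (nat \<Rightarrow> complex) \<Rightarrow> int \<Rightarrow> int \<Rightarrow> complex" where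
  "asum n \<alpha> k l = (if l < 0 then 0 else (\<Sum>i\<in>{k..k+l}. aidx n \<alpha> i))"

definition A0 :: "nat \<Rightarrow> (nat \<Rightarrow> complex) \<Rightarrow> nat \<Rightarrow> nat \<Rightarrow> complex" where
  "A0 n \<alpha> i j =
     (if i = j \<and> i < n then - asum n \<alpha> (2 * int i + 2) (2 * int n - 2 * int i - 1) else 0)
   + (if i < n \<and> i < j \<and> j \<le> n then aidx n \<alpha> (2 * int j + 1) else 0)"

definition A1 :: "nat \<Rightarrow> (nat \<Rightarrow> complex) \<Rightarrow> nat \<Rightarrow> nat \<Rightarrow> complex" where
  "A1 n \<alpha> i j = aidx n \<alpha> (2 * int j + 1)"

definition theta :: "complex \<Rightarrow> (complex \<Rightarrow> complex) \<Rightarrow> complex \<Rightarrow> complex" where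
  "theta c f = (\<lambda>t. t * deriv f t + c * f t)"

definition theta_prod :: "complex list \<Rightarrow> (complex \<Rightarrow> complex) \<Rightarrow> complex \<Rightarrow> complex" where
  "theta_prod cs f = foldr theta cs f"

definition hg_a :: "nat \<Rightarrow> (nat \<Rightarrow> complex) \<Rightarrow> nat \<Rightarrow> nat \<Rightarrow> complex" where
  "hg_a n \<alpha> i j =
     (if j = 0 then asum n \<alpha> 1 (2 * int n)
      else if j \<le> n - i then 1 + asum n \<alpha> (2 * int n - 2 * int j + 3) (2 * int j - 2)
      else asum n \<alpha> (2 * int n - 2 * int j + 3) (2 * int j - 2))"

definition hg_b :: "nat \<Rightarrow> (nat \<Rightarrow> complex) \<Rightarrow> nat \<Rightarrow> nat \<Rightarrow> complex" where
  "hg_b n \<alpha> i j =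
     (if j \<le> n - i then 1 + asum n \<alpha> (2 * int n - 2 * int j + 2) (2 * int j - 1)
      else asum n \<alpha> (2 * int n - 2 * int j + 2) (2 * int j - 1))"

end

theory Submission
  imports Defs "HOL-Complex_Analysis.Cauchy_Integral_Formula"
begin

text \<open>
  Write theta_c = delta + c and s_m = alpha_m + ... + alpha_(2n+1) (this is tail m below).
  Since A_0 is upper triangular with diagonal entries -s_(2k+2) and all rows of A_1 are equal,
  row k of the system reads
    theta_(s_(2k+2)) x_k = sum_(j>k) alpha_(2j+1) x_j + t/(1-t) sum_j alpha_(2j+1) x_j.
  Comparing consecutive rows gives theta_(s_(2k+2)) x_k = theta_(s_(2k+3)) x_(k+1), and comparing
  the last row with the first gives delta x_n = t theta_(s_1) x_0. The operators theta_c commute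
  and satisfy theta_c (t f) = t theta_(c+1) f, so these relations can be chained around the cycle
  x_i -> x_n -> x_0 -> x_i, which produces the hypergeometric equation of x_i with its factors
  permuted.
\<close>

definition eq_on :: "'a set \<Rightarrow> ('a \<Rightarrow> 'b) \<Rightarrow> ('a \<Rightarrow> 'b) \<Rightarrow> bool" where
  "eq_on U f g \<longleftrightarrow> (\<forall>t\<in>U. f t = g t)"

lemma eq_on_refl [simp]: "eq_on U f f"
  by (simp add: eq_on_def)

lemma eq_on_sym: "eq_on U f g \<Longrightarrow> eq_on U g f"
  by (simp add: eq_on_def)

lemma eq_on_trans [trans]: "eq_on U f g \<Longrightarrow> eq_on U g h \<Longrightarrow> eq_on U f h"
  by (simp add: eq_on_def)

lemma eq_on_eq_trans [trans]: "eq_on U f g \<Longrightarrow> g = h \<Longrightarrow> eq_on U f h"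
  and eq_eq_on_trans [trans]: "f = g \<Longrightarrow> eq_on U g h \<Longrightarrow> eq_on U f h"
  by simp_all

lemma eq_on_mult_left: "eq_on U f g \<Longrightarrow> eq_on U (\<lambda>t. c t * f t) (\<lambda>t. c t * g t)"
  by (simp add: eq_on_def)

lemma theta_add: "theta (c + d) f t = theta c f t + d * f t"
  by (simp add: theta_def algebra_simps)

lemma theta_holomorphic: "open U \<Longrightarrow> f holomorphic_on U \<Longrightarrow> theta c f holomorphic_on U"
  unfolding theta_def by (intro holomorphic_intros) auto

lemma theta_cong:
  assumes "open U" "eq_on U f g"
  shows "eq_on U (theta c f) (theta c g)"
  unfolding eq_on_def
proof
  fix t assume t: "t \<in> U"
  have "eventually (\<lambda>y. f y = g y) (nhds t)"
    using assms t unfolding eq_on_def eventually_nhds by blast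
  then have "deriv f t = deriv g t"
    by (rule deriv_cong_ev) simp
  then show "theta c f t = theta c g t"
    using assms t by (simp add: eq_on_def theta_def)
qed

lemma theta_commute:
  assumes U: "open U" and f: "f holomorphic_on U"
  shows "eq_on U (theta c (theta d f)) (theta d (theta c f))"
  unfolding eq_on_def
proof
  fix t assume t: "t \<in> U"
  have f': "(f has_field_derivative deriv f t) (at t)"
    using holomorphic_derivI[OF f U t] .
  have f'': "(deriv f has_field_derivative deriv (deriv f) t) (at t)"
    using holomorphic_derivI[OF holomorphic_deriv[OF f U] U t] .
  have "deriv (theta e f) t = (1 + e) * deriv f t + t * deriv (deriv f) t" for e
    unfolding theta_def
    using DERIV_imp_deriv[OF DERIV_add[OF DERIV_mult'[OF DERIV_ident f''] DERIV_cmult[OF f', of e]]]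
    by (simp add: algebra_simps)
  then show "theta c (theta d f) t = theta d (theta c f) t"
    by (simp add: theta_def algebra_simps)
qed

lemma theta_mult_ident:
  assumes U: "open U" and f: "f holomorphic_on U"
  shows "eq_on U (theta c (\<lambda>t. t * f t)) (\<lambda>t. t * theta (c + 1) f t)"
  unfolding eq_on_def
proof
  fix t assume t: "t \<in> U"
  have "deriv (\<lambda>t. t * f t) t = f t + t * deriv f t"
    using DERIV_imp_deriv[OF DERIV_mult'[OF DERIV_ident holomorphic_derivI[OF f U t]]]
    by simp
  then show "theta c (\<lambda>t. t * f t) t = t * theta (c + 1) f t"
    by (simp add: theta_def algebra_simps)
qed

lemma theta_prod_Nil [simp]: "theta_prod [] f = f"
  and theta_prod_Cons [simp]: "theta_prod (c # cs) f = theta c (theta_prod cs f)"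
  and theta_prod_append: "theta_prod (cs @ ds) f = theta_prod cs (theta_prod ds f)"
  by (simp_all add: theta_prod_def)

lemma theta_prod_holomorphic:
  "open U \<Longrightarrow> f holomorphic_on U \<Longrightarrow> theta_prod cs f holomorphic_on U"
  by (induction cs) (auto intro: theta_holomorphic)

lemma theta_prod_cong:
  "open U \<Longrightarrow> eq_on U f g \<Longrightarrow> eq_on U (theta_prod cs f) (theta_prod cs g)"
  by (induction cs) (auto intro: theta_cong)

lemma theta_prod_mult_ident:
  assumes U: "open U" and f: "f holomorphic_on U"
  shows "eq_on U (theta_prod cs (\<lambda>t. t * f t)) (\<lambda>t. t * theta_prod (map (\<lambda>c. c + 1) cs) f t)"
proof (induction cs)
  case (Cons c cs)
  have "eq_on U (theta_prod (c # cs) (\<lambda>t. t * f t))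
                (theta c (\<lambda>t. t * theta_prod (map (\<lambda>c. c + 1) cs) f t))"
    using theta_cong[OF U Cons.IH] by simp
  also have "eq_on U \<dots> (\<lambda>t. t * theta (c + 1) (theta_prod (map (\<lambda>c. c + 1) cs) f) t)"
    by (rule theta_mult_ident[OF U theta_prod_holomorphic[OF U f]])
  finally show ?case by simp
qed simp

lemma theta_prod_commute:
  assumes U: "open U" and f: "f holomorphic_on U"
  shows "eq_on U (theta c (theta_prod cs f)) (theta_prod cs (theta c f))"
proof (induction cs)
  case (Cons d cs)
  have "eq_on U (theta c (theta_prod (d # cs) f)) (theta d (theta c (theta_prod cs f)))"
    using theta_commute[OF U theta_prod_holomorphic[OF U f]] by simp
  also have "eq_on U \<dots> (theta d (theta_prod cs (theta c f)))"
    by (rule theta_cong[OF U Cons.IH])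
  finally show ?case by simp
qed simp

lemma theta_prod_perm:
  assumes U: "open U"
  shows "f holomorphic_on U \<Longrightarrow> mset cs = mset ds \<Longrightarrow>
           eq_on U (theta_prod cs f) (theta_prod ds f)"
proof (induction cs arbitrary: ds f)
  case (Cons c cs)
  note f = Cons.prems(1)
  have "c \<in> set ds"
    using Cons.prems(2) by (metis list.set_intros(1) set_mset_mset)
  then obtain ds1 ds2 where ds: "ds = ds1 @ c # ds2"
    by (meson split_list)
  have "eq_on U (theta_prod (c # cs) f) (theta_prod cs (theta c f))"
    using theta_prod_commute[OF U f] by simp
  also have "eq_on U \<dots> (theta_prod (ds1 @ ds2) (theta c f))"
    using Cons.prems(2) ds by (intro Cons.IH theta_holomorphic[OF U f]) simp
  also have "\<dots> = theta_prod ds1 (theta_prod ds2 (theta c f))"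
    by (simp add: theta_prod_append)
  also have "eq_on U \<dots> (theta_prod ds1 (theta c (theta_prod ds2 f)))"
    by (rule theta_prod_cong[OF U eq_on_sym[OF theta_prod_commute[OF U f]]])
  also have "\<dots> = theta_prod ds f"
    by (simp add: ds theta_prod_append)
  finally show ?case .
qed simp

lemma mset_map_upt_reflect:
  "mset (map f [m..<n]) = mset (map (\<lambda>k. f (m + n - Suc k)) [m..<n])"
proof -
  have "map f [m..<n] = rev (map (\<lambda>k. f (m + n - Suc k)) [m..<n])"
    by (rule nth_equalityI) (auto simp: rev_nth)
  then show ?thesis by simp
qed

locale hypergeometric_parameters =
  fixes n :: nat and \<alpha> :: "nat \<Rightarrow> complex"
begin

abbreviation \<beta> :: "nat \<Rightarrow> complex" where
  "\<beta> j \<equiv> aidx n \<alpha> (2 * int j + 1)"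

definition tail :: "nat \<Rightarrow> complex" where
  "tail m = asum n \<alpha> (int m) (2 * int n + 1 - int m)"

lemma tail_eq_sum: "tail m = (\<Sum>i\<in>{int m..2 * int n + 1}. aidx n \<alpha> i)"
  by (simp add: tail_def asum_def)

lemma tail_even: "tail (2 * k + 2) = asum n \<alpha> (2 * int k + 2) (2 * int n - 2 * int k - 1)"
  by (simp add: tail_def ac_simps)

lemma tail_last: "tail (2 * n + 2) = 0"
  by (simp add: tail_eq_sum)

lemma tail_odd: "k \<le> n \<Longrightarrow> tail (2 * k + 1) = \<beta> k + tail (2 * k + 2)"
proof -
  assume "k \<le> n"
  then have "{int (2 * k + 1)..2 * int n + 1} = insert (2 * int k + 1) {int (2 * k + 2)..2 * int n + 1}"
    by auto
  then show ?thesis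
    by (simp add: tail_eq_sum)
qed

lemma theta_tail_odd:
  "k \<le> n \<Longrightarrow> theta (tail (2 * k + 1)) f t = theta (tail (2 * k + 2)) f t + \<beta> k * f t"
  by (metis tail_odd theta_add add.commute)

lemma hg_a_0: "hg_a n \<alpha> i 0 = tail 1"
  by (simp add: hg_a_def tail_def)

lemma hg_a_reflect:
  assumes "1 \<le> k" "k \<le> n"
  shows "hg_a n \<alpha> i (Suc n - k) = (if i < k then tail (2 * k + 1) + 1 else tail (2 * k + 1))"
proof -
  have "Suc n - k \<noteq> 0" "Suc n - k \<le> n - i \<longleftrightarrow> i < k" "int (Suc n - k) = int n + 1 - int k"
    using assms by auto
  then show ?thesis
    by (simp add: hg_a_def tail_def algebra_simps)
qed

lemma hg_b_reflect:
  assumes "k < n"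
  shows "hg_b n \<alpha> i (n - k) = (if i \<le> k then tail (2 * k + 2) + 1 else tail (2 * k + 2))"
proof -
  have "n - k \<le> n - i \<longleftrightarrow> i \<le> k" "int (n - k) = int n - int k"
    using assms by auto
  then show ?thesis
    by (simp add: hg_b_def tail_def algebra_simps)
qed

text \<open>The parameters of the equation for x_i, in the order in which the cycle produces them.\<close>

definition lower_params :: "nat \<Rightarrow> complex list" where
  "lower_params i = 0 # map (\<lambda>k. tail (2 * k + 2) - 1) [0..<i]
                       @ map (\<lambda>k. tail (2 * k + 2)) [i..<n]"

definition upper_params :: "nat \<Rightarrow> complex list" where
  "upper_params i = tail 1 # map (\<lambda>k. tail (2 * k + 1) + 1) [Suc i..<Suc n]
                           @ map (\<lambda>k. tail (2 * k + 1)) [1..<Suc i]"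

lemma mset_hg_a:
  assumes i: "i \<le> n"
  shows "mset (map (hg_a n \<alpha> i) [0..<n+1]) = mset (upper_params i)"
proof -
  have split: "[1..<Suc n] = [1..<Suc i] @ [Suc i..<Suc n]"
    using i upt_add_eq_append[of 1 "Suc i" "n - i"] by simp
  have reflected: "map (\<lambda>k. hg_a n \<alpha> i (Suc n - k)) [1..<Suc n]
                     = map (\<lambda>k. tail (2 * k + 1)) [1..<Suc i]
                       @ map (\<lambda>k. tail (2 * k + 1) + 1) [Suc i..<Suc n]"
    unfolding split map_append using i
    by (intro arg_cong2[where f = "(@)"] map_cong refl) (auto simp: hg_a_reflect simp del: upt_Suc)
  have "mset (map (hg_a n \<alpha> i) [1..<Suc n]) = mset (map (\<lambda>k. hg_a n \<alpha> i (Suc n - k)) [1..<Suc n])"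
    using mset_map_upt_reflect[of "hg_a n \<alpha> i" 1 "Suc n"] by (simp del: upt_Suc)
  moreover have "map (hg_a n \<alpha> i) [0..<n+1] = tail 1 # map (hg_a n \<alpha> i) [1..<Suc n]"
    by (simp add: upt_conv_Cons hg_a_0 del: upt_Suc)
  ultimately show ?thesis
    unfolding upper_params_def reflected by (simp add: ac_simps del: upt_Suc)
qed

lemma mset_hg_b:
  assumes i: "i \<le> n"
  shows "mset (0 # map (\<lambda>j. hg_b n \<alpha> i j - 1) [1..<n+1]) = mset (lower_params i)"
proof -
  have split: "[0..<n] = [0..<i] @ [i..<n]"
    using i upt_add_eq_append[of 0 i "n - i"] by simp
  have reflected: "map (\<lambda>k. hg_b n \<alpha> i (Suc (n - Suc k)) - 1) [0..<n]
                     = map (\<lambda>k. tail (2 * k + 2) - 1) [0..<i] @ map (\<lambda>k. tail (2 * k + 2)) [i..<n]"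
    unfolding split map_append using i
    by (intro arg_cong2[where f = "(@)"] map_cong refl) (simp_all add: Suc_diff_Suc hg_b_reflect)
  have "map (\<lambda>j. hg_b n \<alpha> i j - 1) [1..<n+1] = map (\<lambda>k. hg_b n \<alpha> i (Suc k) - 1) [0..<n]"
    by (simp add: map_Suc_upt[symmetric] del: upt_Suc)
  then show ?thesis
    using mset_map_upt_reflect[of "\<lambda>k. hg_b n \<alpha> i (Suc k) - 1" 0 n] reflected
    by (simp add: lower_params_def)
qed

end

locale fuchsian_system = hypergeometric_parameters +
  fixes x :: "nat \<Rightarrow> complex \<Rightarrow> complex" and U :: "complex set"
  assumes U: "open U" "0 \<notin> U" "1 \<notin> U"
    and ode: "\<And>k t. k \<le> n \<Longrightarrow> t \<in> U \<Longrightarrow>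
               (x k has_field_derivative
                  (\<Sum>j\<le>n. (A0 n \<alpha> k j / t + A1 n \<alpha> k j / (1 - t)) * x j t)) (at t)"
begin

lemma x_holomorphic: "k \<le> n \<Longrightarrow> x k holomorphic_on U"
  using ode U(1) by (auto simp: holomorphic_on_open)

lemma A0_row_sum:
  assumes k: "k \<le> n"
  shows "(\<Sum>j\<le>n. A0 n \<alpha> k j * y j) = - tail (2 * k + 2) * y k + (\<Sum>j\<in>{k<..n}. \<beta> j * y j)"
proof -
  have "(\<Sum>j\<le>n. (if k = j \<and> k < n then - tail (2 * k + 2) else 0) * y j)
          = (\<Sum>j\<le>n. if j = k then - tail (2 * k + 2) * y k else 0)"
    using tail_last by (intro sum.cong) auto
  also have "\<dots> = - tail (2 * k + 2) * y k"
    using k by simp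
  finally have diag: "(\<Sum>j\<le>n. (if k = j \<and> k < n then - tail (2 * k + 2) else 0) * y j)
                        = - tail (2 * k + 2) * y k" .
  have upper: "(\<Sum>j\<le>n. (if k < n \<and> k < j \<and> j \<le> n then \<beta> j else 0) * y j)
                 = (\<Sum>j\<in>{k<..n}. \<beta> j * y j)"
    by (rule sum.mono_neutral_cong_right) auto
  have "(\<Sum>j\<le>n. A0 n \<alpha> k j * y j)
          = (\<Sum>j\<le>n. (if k = j \<and> k < n then - tail (2 * k + 2) else 0) * y j)
          + (\<Sum>j\<le>n. (if k < n \<and> k < j \<and> j \<le> n then \<beta> j else 0) * y j)"
    unfolding A0_def tail_even by (simp add: sum.distrib distrib_right)
  then show ?thesis
    using diag upper by simp
qed

lemma theta_tail_x:
  assumes k: "k \<le> n" and t: "t \<in> U"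
  shows "theta (tail (2 * k + 2)) (x k) t
           = (\<Sum>j\<in>{k<..n}. \<beta> j * x j t) + t / (1 - t) * (\<Sum>j\<le>n. \<beta> j * x j t)"
proof -
  have "t \<noteq> 0" "1 - t \<noteq> 0"
    using t U by auto
  then have "t * deriv (x k) t
               = (\<Sum>j\<le>n. A0 n \<alpha> k j * x j t + t / (1 - t) * (\<beta> j * x j t))"
    unfolding DERIV_imp_deriv[OF ode[OF k t]] sum_distrib_left
    by (intro sum.cong) (auto simp: A1_def field_simps)
  then show ?thesis
    using A0_row_sum[OF k] by (simp add: theta_def sum.distrib sum_distrib_left)
qed

lemma theta_tail_x_Suc:
  assumes k: "k < n"
  shows "eq_on U (theta (tail (2 * k + 2)) (x k)) (theta (tail (2 * Suc k + 1)) (x (Suc k)))"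
  unfolding eq_on_def
proof
  fix t assume t: "t \<in> U"
  have "{k<..n} = insert (Suc k) {Suc k<..n}"
    using k by auto
  then show "theta (tail (2 * k + 2)) (x k) t = theta (tail (2 * Suc k + 1)) (x (Suc k)) t"
    using k t theta_tail_x[of k t] theta_tail_x[of "Suc k" t] theta_tail_odd[of "Suc k"] by simp
qed

lemma theta_x_last_first: "eq_on U (theta 0 (x n)) (\<lambda>t. t * theta (tail 1) (x 0) t)"
  unfolding eq_on_def
proof
  fix t assume t: "t \<in> U"
  define S where "S = (\<Sum>j\<le>n. \<beta> j * x j t)"
  have "1 - t \<noteq> 0"
    using t U by auto
  have "{..n} = insert 0 {0<..n}"
    by auto
  then have first: "theta (tail 1) (x 0) t = S + t / (1 - t) * S"
    using t theta_tail_x[of 0 t] theta_tail_odd[of 0] by (simp add: S_def)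
  have last: "theta 0 (x n) t = t / (1 - t) * S"
    using t theta_tail_x[of n t] tail_last by (simp add: S_def)
  show "theta 0 (x n) t = t * theta (tail 1) (x 0) t"
    unfolding first last using \<open>1 - t \<noteq> 0\<close> by (simp add: field_simps)
qed

lemma theta_prod_x_chain:
  assumes "i \<le> j" "j \<le> n"
  shows "eq_on U (theta_prod (map (\<lambda>k. tail (2 * k + 2)) [i..<j]) (x i))
                 (theta_prod (map (\<lambda>k. tail (2 * k + 1)) [Suc i..<Suc j]) (x j))"
  using assms
proof (induction j rule: dec_induct)
  case (step j)
  let ?L = "map (\<lambda>k. tail (2 * k + 2)) [i..<j]"
  let ?M = "map (\<lambda>k. tail (2 * k + 1)) [Suc i..<Suc j]"
  have hol: "x i holomorphic_on U" "x j holomorphic_on U"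
    using step x_holomorphic by auto
  have "theta_prod (map (\<lambda>k. tail (2 * k + 2)) [i..<Suc j]) (x i)
          = theta_prod ?L (theta (tail (2 * j + 2)) (x i))"
    using step.hyps by (simp add: theta_prod_append)
  also have "eq_on U \<dots> (theta (tail (2 * j + 2)) (theta_prod ?L (x i)))"
    by (rule eq_on_sym[OF theta_prod_commute[OF U(1) hol(1)]])
  also have "eq_on U \<dots> (theta (tail (2 * j + 2)) (theta_prod ?M (x j)))"
    using step by (intro theta_cong U(1)) simp
  also have "eq_on U \<dots> (theta_prod ?M (theta (tail (2 * j + 2)) (x j)))"
    by (rule theta_prod_commute[OF U(1) hol(2)])
  also have "eq_on U \<dots> (theta_prod ?M (theta (tail (2 * Suc j + 1)) (x (Suc j))))"
    using step theta_tail_x_Suc[of j] by (intro theta_prod_cong U(1)) simp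
  also have "\<dots> = theta_prod (map (\<lambda>k. tail (2 * k + 1)) [Suc i..<Suc (Suc j)]) (x (Suc j))"
    using step.hyps by (simp add: theta_prod_append)
  finally show ?case .
qed simp

lemma hypergeometric_equation_reordered:
  assumes i: "i \<le> n"
  shows "eq_on U (theta_prod (lower_params i) (x i)) (\<lambda>t. t * theta_prod (upper_params i) (x i) t)"
proof -
  let ?B0 = "map (\<lambda>k. tail (2 * k + 2)) [0..<i]"
  let ?B0' = "map (\<lambda>k. tail (2 * k + 2) - 1) [0..<i]"
  let ?A2 = "map (\<lambda>k. tail (2 * k + 1)) [Suc i..<Suc n]"
  let ?A2' = "map (\<lambda>k. tail (2 * k + 1) + 1) [Suc i..<Suc n]"
  let ?A1 = "map (\<lambda>k. tail (2 * k + 1)) [1..<Suc i]"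
  have hol: "x 0 holomorphic_on U" "x i holomorphic_on U" "x n holomorphic_on U"
    using i x_holomorphic by auto
  have shift: "map (\<lambda>c. c + 1) (?B0' @ ?A2) = ?B0 @ ?A2'"
    by simp
  have inner: "eq_on U (theta_prod (?B0 @ ?A2') (theta (tail 1) (x 0)))
                       (theta_prod (tail 1 # ?A2' @ ?A1) (x i))"
  proof -
    have "theta_prod (?B0 @ ?A2') (theta (tail 1) (x 0)) = theta_prod ((?B0 @ ?A2') @ [tail 1]) (x 0)"
      by (simp add: theta_prod_append)
    also have "eq_on U \<dots> (theta_prod ((tail 1 # ?A2') @ ?B0) (x 0))"
      by (rule theta_prod_perm[OF U(1) hol(1)]) simp
    also have "\<dots> = theta_prod (tail 1 # ?A2') (theta_prod ?B0 (x 0))"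
      by (simp only: theta_prod_append)
    also have "eq_on U \<dots> (theta_prod (tail 1 # ?A2') (theta_prod ?A1 (x i)))"
      using theta_prod_x_chain[of 0 i] i by (intro theta_prod_cong U(1)) simp
    finally show ?thesis
      by (simp add: theta_prod_append)
  qed
  have "theta_prod (0 # ?B0' @ map (\<lambda>k. tail (2 * k + 2)) [i..<n]) (x i)
          = theta_prod (0 # ?B0') (theta_prod (map (\<lambda>k. tail (2 * k + 2)) [i..<n]) (x i))"
    by (simp add: theta_prod_append)
  also have "eq_on U \<dots> (theta_prod (0 # ?B0') (theta_prod ?A2 (x n)))"
    using theta_prod_x_chain[of i n] i by (intro theta_prod_cong U(1)) simp
  also have "eq_on U \<dots> (theta_prod ((?B0' @ ?A2) @ [0]) (x n))"
    by (simp only: theta_prod_append[symmetric] append_Cons) (rule theta_prod_perm[OF U(1) hol(3)], simp)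
  also have "\<dots> = theta_prod (?B0' @ ?A2) (theta 0 (x n))"
    by (simp add: theta_prod_append)
  also have "eq_on U \<dots> (theta_prod (?B0' @ ?A2) (\<lambda>t. t * theta (tail 1) (x 0) t))"
    by (rule theta_prod_cong[OF U(1) theta_x_last_first])
  also have "eq_on U \<dots> (\<lambda>t. t * theta_prod (?B0 @ ?A2') (theta (tail 1) (x 0)) t)"
    using theta_prod_mult_ident[OF U(1) theta_holomorphic[OF U(1) hol(1)], of "?B0' @ ?A2"]
    by (simp only: shift)
  also have "eq_on U \<dots> (\<lambda>t. t * theta_prod (tail 1 # ?A2' @ ?A1) (x i) t)"
    by (rule eq_on_mult_left[OF inner])
  finally show ?thesis
    by (simp only: lower_params_def upper_params_def)
qed

end

theorem corollary3p2:
  fixes n :: nat and \<alpha> :: "nat \<Rightarrow> complex"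
    and x :: "nat \<Rightarrow> complex \<Rightarrow> complex" and U :: "complex set"
  assumes n: "n \<ge> 1"
    and sum1: "(\<Sum>i\<le>2*n+1. \<alpha> i) = 1"
    and h1: "\<And>i j. 1 \<le> i \<Longrightarrow> i \<le> n \<Longrightarrow> 1 \<le> j \<Longrightarrow> j \<le> n - i + 1 \<Longrightarrow>
               asum n \<alpha> (2 * int i) (2 * int j - 1) \<notin> \<int>"
    and h2: "(\<Sum>i\<le>n. \<alpha> (2*i+1)) \<notin> \<int>"
    and h3: "\<And>i j. 1 \<le> i \<Longrightarrow> i \<le> n \<Longrightarrow> 1 \<le> j \<Longrightarrow> j \<le> n - i + 1 \<Longrightarrow>
               asum n \<alpha> (2 * int i - 1) (2 * int j - 1) \<notin> \<int>"
    and U: "open U" "0 \<notin> U" "1 \<notin> U"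
    and ode: "\<And>k t. k \<le> n \<Longrightarrow> t \<in> U \<Longrightarrow>
               (x k has_field_derivative
                  (\<Sum>j\<le>n. (A0 n \<alpha> k j / t + A1 n \<alpha> k j / (1 - t)) * x j t)) (at t)"
  shows "\<forall>i\<le>n. \<forall>t\<in>U.
           theta_prod (0 # map (\<lambda>j. hg_b n \<alpha> i j - 1) [1..<n+1]) (x i) t
           - t * theta_prod (map (hg_a n \<alpha> i) [0..<n+1]) (x i) t = 0"
proof (intro allI impI ballI)
  fix i t assume i: "i \<le> n" and t: "t \<in> U"
  interpret fuchsian_system n \<alpha> x U
    using U ode by unfold_locales
  have hol: "x i holomorphic_on U"
    using i x_holomorphic by simp
  have "eq_on U (theta_prod (0 # map (\<lambda>j. hg_b n \<alpha> i j - 1) [1..<n+1]) (x i))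
                (theta_prod (lower_params i) (x i))"
    using mset_hg_b[OF i] by (intro theta_prod_perm U(1) hol)
  also have "eq_on U \<dots> (\<lambda>t. t * theta_prod (upper_params i) (x i) t)"
    by (rule hypergeometric_equation_reordered[OF i])
  also have "eq_on U \<dots> (\<lambda>t. t * theta_prod (map (hg_a n \<alpha> i) [0..<n+1]) (x i) t)"
    using mset_hg_a[OF i] by (intro eq_on_mult_left theta_prod_perm U(1) hol) simp
  finally show "theta_prod (0 # map (\<lambda>j. hg_b n \<alpha> i j - 1) [1..<n+1]) (x i) t
                  - t * theta_prod (map (hg_a n \<alpha> i) [0..<n+1]) (x i) t = 0"
    using t by (simp add: eq_on_def)
qed

end
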